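(* Let $\mu \in X^*(\underline{T})$ be a character. We have: \begin{align*} \mathrm{Trns}_\mu\big(\Lambda_W^\mu\times\mathcal{A}\big)= \left\{ \begin{aligned} \lambda\in X_1(\underline{T})/(p-\pi)X^0(\underline{T})&\quad\text{such that $\lambda$ is $p$-regular and}\\ &\quad(\lambda-\mu+\eta)|_{\underline{Z}}\in(p-\pi)X^*(\underline{Z}) \end{aligned} \right\} \end{align*}
   Context: Let $\underline{G}=(\mathrm{Res}_{\mathbb{F}_{p^f}/\mathbb{F}_p}\mathrm{GL}_3)\times\mathbb{F}\cong\mathrm{GL}_3^f$ with diagonal torus $\underline T$ and center $\underline Z$, $X^*(\underline T)\cong(\mathbb{Z}^3)^f$, $X_1(\underline T)$ the $p$-restricted dominant weights, $\eta=((1,0,-1))_i$, $\pi$ the Frobenius shift $(\pi\lambda)_i=\lambda_{i-1}$. Let $\Lambda_W\supset\Lambda_R$ be the weight and root lattices of $\mathrm{SL}_3^f$, $\lambda\mapsto\overline\lambda$ restriction $X^*(\underline T)\to\Lambda_W$ with kernel $X^0(\underline T)$, $\mathrm{can}$ the canonical identification of $\Lambda_R$ with the characters of $\underline T$ trivial on $\underline Z$, $\mathrm{sec}:\Lambda_W\to X^*(\underline T)$ a section. With the $p$-dot action $t_\lambda w\cdot\mu=p\lambda+w(\mu+\eta)-\eta$, let $\underline A$ be the lowest dominant $p$-restricted alcove, $\mathcal A=\{A,B\}^f$ the dominant $p$-restricted alcoves, $\widetilde{\underline W}^{+,\mathrm{der}}_1$ the elements $wt_{-\pi^{-1}\omega}$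 of $\Lambda_W\rtimes S_3^f$ taking $\underline A$ into $\mathcal A$. Writing uniquely elements of $\Lambda_W\times\mathcal A$ as $(\omega+\nu,\pi wt_{-\pi^{-1}\omega}\cdot\underline A)$, $\nu\in\Lambda_R$, define $\mathrm{Trns}_\mu(\omega+\nu,\pi wt_{-\pi^{-1}\omega}\cdot\underline A)=wt_{-\pi^{-1}\mathrm{sec}(\omega)}\cdot(\mu-\eta+\mathrm{can}(\nu)+\mathrm{sec}(\omega))$ modulo $(p-\pi)X^0(\underline T)$, and $\Lambda_W^\mu=\{\omega\in\Lambda_W:\omega+\overline{\mu-\eta}\in\underline A\}$. A weight $\lambda$ is $p$-regular if $\langle\lambda+\eta,\alpha^\vee\rangle\notin p\mathbb Z$ for all positive roots $\alpha$. *)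

theory Defs
  imports Complex_Main "HOL-Combinatorics.Permutations" "HOL-Computational_Algebra.Primes"
begin

text \<open>Conventions. f is the number of GL_3 factors, p the prime.
  Characters of the diagonal torus of GL_3^f are modelled as functions
  x :: nat => nat => int, x i j being the j-th coordinate (j < 3) of the
  i-th factor (i < f), and zero outside this range.  Real points of
  X^*(T) (x) R are modelled likewise with real values.\<close>

definition Xw :: "nat \<Rightarrow> (nat \<Rightarrow> nat \<Rightarrow> int) set" where
  "Xw f = {x. \<forall>i j. (f \<le> i \<or> 3 \<le> j) \<longrightarrow> x i j = 0}"

definition Xr :: "nat \<Rightarrow> (nat \<Rightarrow> nat \<Rightarrow> real) set" where
  "Xr f = {x. \<forall>i j. (f \<le> i \<or> 3 \<le> j) \<longrightarrow> x i j = 0}"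

definition X0 :: "nat \<Rightarrow> (nat \<Rightarrow> nat \<Rightarrow> int) set" where
  "X0 f = {x \<in> Xw f. \<forall>i<f. x i 0 = x i 1 \<and> x i 1 = x i 2}"

definition eta :: "nat \<Rightarrow> nat \<Rightarrow> nat \<Rightarrow> int" where
  "eta f i j = (if i < f \<and> j < 3 then 1 - int j else 0)"

definition frob :: "nat \<Rightarrow> (nat \<Rightarrow> nat \<Rightarrow> 'a) \<Rightarrow> nat \<Rightarrow> nat \<Rightarrow> 'a" where
  "frob f x i j = (if i < f then x ((i + f - 1) mod f) j else x i j)"

definition frobinv :: "nat \<Rightarrow> (nat \<Rightarrow> nat \<Rightarrow> 'a) \<Rightarrow> nat \<Rightarrow> nat \<Rightarrow> 'a" where
  "frobinv f x i j = (if i < f then x ((i + 1) mod f) j else x i j)"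

definition pmpi :: "nat \<Rightarrow> nat \<Rightarrow> (nat \<Rightarrow> nat \<Rightarrow> int) \<Rightarrow> nat \<Rightarrow> nat \<Rightarrow> int" where
  "pmpi f p x i j = int p * x i j - frob f x i j"

definition cls :: "nat \<Rightarrow> nat \<Rightarrow> (nat \<Rightarrow> nat \<Rightarrow> int) \<Rightarrow> (nat \<Rightarrow> nat \<Rightarrow> int) set" where
  "cls f p x = {y \<in> Xw f. \<exists>z \<in> X0 f. (\<lambda>i j. y i j - x i j) = pmpi f p z}"

definition Wgrp :: "nat \<Rightarrow> (nat \<Rightarrow> nat \<Rightarrow> nat) set" where
  "Wgrp f = {w. (\<forall>i<f. w i permutes {..<3}) \<and> (\<forall>i. f \<le> i \<longrightarrow> w i = id)}"

definition wact :: "(nat \<Rightarrow> nat \<Rightarrow> nat) \<Rightarrow> (nat \<Rightarrow> nat \<Rightarrow> 'a) \<Rightarrow> nat \<Rightarrow> nat \<Rightarrow> 'a" where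
  "wact w x i j = x i (inv (w i) j)"

definition dot :: "nat \<Rightarrow> nat \<Rightarrow> (nat \<Rightarrow> nat \<Rightarrow> nat) \<Rightarrow> (nat \<Rightarrow> nat \<Rightarrow> int)
    \<Rightarrow> (nat \<Rightarrow> nat \<Rightarrow> int) \<Rightarrow> nat \<Rightarrow> nat \<Rightarrow> int" where
  "dot f p w l m = (\<lambda>i j. wact w (\<lambda>i' j'. m i' j' + int p * l i' j' + eta f i' j') i j - eta f i j)"

definition dotR :: "nat \<Rightarrow> nat \<Rightarrow> (nat \<Rightarrow> nat \<Rightarrow> nat) \<Rightarrow> (nat \<Rightarrow> nat \<Rightarrow> int)
    \<Rightarrow> (nat \<Rightarrow> nat \<Rightarrow> real) \<Rightarrow> nat \<Rightarrow> nat \<Rightarrow> real" where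
  "dotR f p w l x = (\<lambda>i j. wact w (\<lambda>i' j'. x i' j' + real p * of_int (l i' j') + of_int (eta f i' j')) i j
                        - of_int (eta f i j))"

definition X1 :: "nat \<Rightarrow> nat \<Rightarrow> (nat \<Rightarrow> nat \<Rightarrow> int) set" where
  "X1 f p = {x \<in> Xw f. \<forall>i<f. 0 \<le> x i 0 - x i 1 \<and> x i 0 - x i 1 \<le> int p - 1
                          \<and> 0 \<le> x i 1 - x i 2 \<and> x i 1 - x i 2 \<le> int p - 1}"

definition p_regular :: "nat \<Rightarrow> nat \<Rightarrow> (nat \<Rightarrow> nat \<Rightarrow> int) \<Rightarrow> bool" where
  "p_regular f p x = (\<forall>i<f. \<forall>j k. j < k \<and> k < 3 \<longrightarrow>
      \<not> (int p dvd ((x i j + eta f i j) - (x i k + eta f i k))))"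

text \<open>Restriction to the centre Z = G_m^f: the i-th component is the sum of coordinates;
  condition: lies in (p - pi) X^*(Z).\<close>
definition resZ :: "nat \<Rightarrow> (nat \<Rightarrow> nat \<Rightarrow> int) \<Rightarrow> nat \<Rightarrow> int" where
  "resZ f x i = (if i < f then (\<Sum>j<3. x i j) else 0)"

definition in_pmpiZ :: "nat \<Rightarrow> nat \<Rightarrow> (nat \<Rightarrow> int) \<Rightarrow> bool" where
  "in_pmpiZ f p z = (\<exists>y::nat \<Rightarrow> int. \<forall>i<f. z i = int p * y i - y ((i + f - 1) mod f))"

text \<open>Weight lattice Lambda_W of SL_3^f = X^*(T)/X^0(T), modelled by the normalised
  representatives with third coordinate 0; restriction map, root lattice, can.\<close>
definition LW :: "nat \<Rightarrow> (nat \<Rightarrow> nat \<Rightarrow> int) set" where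
  "LW f = {x \<in> Xw f. \<forall>i. x i 2 = 0}"

definition res :: "nat \<Rightarrow> (nat \<Rightarrow> nat \<Rightarrow> int) \<Rightarrow> nat \<Rightarrow> nat \<Rightarrow> int" where
  "res f x = (\<lambda>i j. if i < f \<and> j < 3 then x i j - x i 2 else 0)"

definition LR :: "nat \<Rightarrow> (nat \<Rightarrow> nat \<Rightarrow> int) set" where
  "LR f = {x \<in> LW f. \<forall>i<f. 3 dvd (x i 0 + x i 1)}"

text \<open>can: the unique lift of a root-lattice element to a character trivial on Z.\<close>
definition can :: "nat \<Rightarrow> (nat \<Rightarrow> nat \<Rightarrow> int) \<Rightarrow> nat \<Rightarrow> nat \<Rightarrow> int" where
  "can f x = (\<lambda>i j. if i < f \<and> j < 3 then x i j - (x i 0 + x i 1 + x i 2) div 3 else 0)"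

text \<open>Restricted alcoves: component i is A or B according to c i
  (a1 = <x+eta,alpha_1^vee>, a2 = <x+eta,alpha_2^vee>).\<close>
definition alc :: "nat \<Rightarrow> nat \<Rightarrow> (nat \<Rightarrow> bool) \<Rightarrow> (nat \<Rightarrow> nat \<Rightarrow> real) set" where
  "alc f p c = {x \<in> Xr f. \<forall>i<f.
      (let a1 = x i 0 - x i 1 + 1; a2 = x i 1 - x i 2 + 1 in
        (if c i then a1 < real p \<and> a2 < real p \<and> real p < a1 + a2
        else 0 < a1 \<and> 0 < a2 \<and> a1 + a2 < real p))}"

definition alcA :: "nat \<Rightarrow> nat \<Rightarrow> (nat \<Rightarrow> nat \<Rightarrow> real) set" where
  "alcA f p = alc f p (\<lambda>_. False)"

definition Acal :: "nat \<Rightarrow> nat \<Rightarrow> (nat \<Rightarrow> nat \<Rightarrow> real) set set" where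
  "Acal f p = {alc f p c | c. True}"

text \<open>The pair (w, om) stands for w t_{-pi^{-1} om}; Wtil1 = W~_1^{+,der}.\<close>
definition Wtil1 :: "nat \<Rightarrow> nat \<Rightarrow> ((nat \<Rightarrow> nat \<Rightarrow> nat) \<times> (nat \<Rightarrow> nat \<Rightarrow> int)) set" where
  "Wtil1 f p = {(w, om). w \<in> Wgrp f \<and> om \<in> LW f \<and>
      dotR f p w (\<lambda>i j. - frobinv f om i j) ` alcA f p \<in> Acal f p}"

definition decomp :: "nat \<Rightarrow> nat \<Rightarrow> (nat \<Rightarrow> nat \<Rightarrow> int) \<Rightarrow> (nat \<Rightarrow> nat \<Rightarrow> real) set
    \<Rightarrow> (nat \<Rightarrow> nat \<Rightarrow> int) \<times> (nat \<Rightarrow> nat \<Rightarrow> int) \<times> (nat \<Rightarrow> nat \<Rightarrow> nat)" where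
  "decomp f p om' C = (THE (om, nu, w). nu \<in> LR f \<and> (w, om) \<in> Wtil1 f p \<and>
      om' = (\<lambda>i j. om i j + nu i j) \<and>
      C = frob f ` (dotR f p w (\<lambda>i j. - frobinv f om i j) ` alcA f p))"

definition Trns :: "nat \<Rightarrow> nat \<Rightarrow> ((nat \<Rightarrow> nat \<Rightarrow> int) \<Rightarrow> (nat \<Rightarrow> nat \<Rightarrow> int))
    \<Rightarrow> (nat \<Rightarrow> nat \<Rightarrow> int) \<Rightarrow> (nat \<Rightarrow> nat \<Rightarrow> int) \<times> (nat \<Rightarrow> nat \<Rightarrow> real) set
    \<Rightarrow> (nat \<Rightarrow> nat \<Rightarrow> int) set" where
  "Trns f p sec mu oC = (case decomp f p (fst oC) (snd oC) of (om, nu, w) \<Rightarrow>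
      cls f p (dot f p w (\<lambda>i j. - frobinv f (sec om) i j)
        (\<lambda>i j. mu i j - eta f i j + can f nu i j + sec om i j)))"

definition LWmu :: "nat \<Rightarrow> nat \<Rightarrow> (nat \<Rightarrow> nat \<Rightarrow> int) \<Rightarrow> (nat \<Rightarrow> nat \<Rightarrow> int) set" where
  "LWmu f p mu = {om \<in> LW f.
     (\<lambda>i j. real_of_int (om i j + res f (\<lambda>i' j'. mu i' j' - eta f i' j') i j)) \<in> alcA f p}"

end

(*
  For one factor GL_3 the elements w t_{-omega} of W~_1^{+,der} can be tabulated: for each of the
  two restricted alcoves A, B and each class of omega modulo the root lattice (i.e. modulo 3) there
  is exactly one.  This makes the decomposition (omega + nu, pi (w t_{-pi^-1 omega} . A)) explicit,
  and evaluating the dot action shows that Trns_mu(omega', C) is the class of a weight lambda for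
  which, factor by factor, lambda + eta lies in an open restricted alcove, i.e. lambda is p-regular
  and p-restricted; the central condition holds for any representative of this shape.
  Conversely, given such a lambda one reads off the alcove of each factor and chooses the table
  entry whose class matches the central condition.  The resulting omega' lies in Lambda_W^mu, and
  the representative of its image differs from lambda by a factorwise constant, which the central
  condition places in (p - pi) X^0(T).
*)

theory Submission
  imports Defs
begin

lemma succ_mod_lt: "i < f \<Longrightarrow> (i + 1) mod f < (f::nat)"
  by simp

lemma pred_mod_lt: "i < f \<Longrightarrow> (i + f - 1) mod f < (f::nat)"
  by simp

lemma pred_succ_mod: "i < f \<Longrightarrow> ((i + 1) mod f + f - 1) mod f = (i::nat)"
proof (cases "i + 1 = f")
  case False
  assume "i < f"
  then have "(i + 1) mod f = i + 1" using False by simp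
  then show ?thesis using \<open>i < f\<close> by simp
qed simp

lemma succ_pred_mod: "i < f \<Longrightarrow> ((i + f - 1) mod f + 1) mod f = (i::nat)"
proof (cases i)
  case (Suc k)
  assume "i < f"
  then have "(i + f - 1) mod f = k"
    using Suc by simp
  then show ?thesis using Suc \<open>i < f\<close> by simp
qed simp

lemmas pred_succ_mod_simp [simp] = pred_succ_mod[simplified]
  and succ_pred_mod_simp [simp] = succ_pred_mod[simplified]

lemma permutes3_cases:
  assumes "w permutes {..<3::nat}"
  shows "(w 0 = 0 \<and> w 1 = 1 \<and> w 2 = 2 \<and> inv w 0 = 0 \<and> inv w 1 = 1 \<and> inv w 2 = 2) \<or>
         (w 0 = 1 \<and> w 1 = 2 \<and> w 2 = 0 \<and> inv w 0 = 2 \<and> inv w 1 = 0 \<and> inv w 2 = 1) \<or>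
         (w 0 = 2 \<and> w 1 = 0 \<and> w 2 = 1 \<and> inv w 0 = 1 \<and> inv w 1 = 2 \<and> inv w 2 = 0) \<or>
         (w 0 = 0 \<and> w 1 = 2 \<and> w 2 = 1 \<and> inv w 0 = 0 \<and> inv w 1 = 2 \<and> inv w 2 = 1) \<or>
         (w 0 = 1 \<and> w 1 = 0 \<and> w 2 = 2 \<and> inv w 0 = 1 \<and> inv w 1 = 0 \<and> inv w 2 = 2) \<or>
         (w 0 = 2 \<and> w 1 = 1 \<and> w 2 = 0 \<and> inv w 0 = 2 \<and> inv w 1 = 1 \<and> inv w 2 = 0)"
proof -
  have range: "w k < 3" if "k < 3" for k
    using permutes_in_image[OF assms] that by auto
  have vals: "w k = 0 \<or> w k = 1 \<or> w k = 2" if "k < 3" for k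
    using range[OF that] by arith
  have "w 0 \<noteq> w 1" "w 0 \<noteq> w 2" "w 1 \<noteq> w 2"
    using permutes_inj[OF assms] by (simp_all add: inj_eq)
  moreover have "inv w (w 0) = 0" "inv w (w 1) = 1" "inv w (w 2) = 2"
    by (simp_all add: permutes_inverses(2)[OF assms])
  moreover note vals[of 0, simplified] vals[of 1, simplified] vals[of 2, simplified]
  ultimately show ?thesis
    by (elim disjE) simp_all
qed

lemma inv_permutes3_lt: "w permutes {..<3::nat} \<Longrightarrow> k < 3 \<Longrightarrow> inv w k < 3"
  using permutes_in_image[OF permutes_inv, of w "{..<3}" k] by simp

(* One factor of W~_1^{+,der}: the pair (w, omega), omega = (om 0, om 1, 0) in the normalised
   representatives of Lambda_W, satisfies w t_{-omega} . A = A if b = False and = B if b = True. *)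
definition Wtil1_factor :: "bool \<Rightarrow> (nat \<Rightarrow> nat) \<Rightarrow> (nat \<Rightarrow> int) \<Rightarrow> bool" where
  "Wtil1_factor b w om \<longleftrightarrow> (b, w 0, w 1, w 2, om 0, om 1) \<in>
     {(False, 0, 1, 2, 0, 0), (False, 1, 2, 0, 1, 1), (False, 2, 0, 1, 1, 0),
      (True, 0, 2, 1, 0, 1), (True, 1, 0, 2, 0, -1), (True, 2, 1, 0, 2, 1)}"

lemma Wtil1_factor_unique:
  assumes "Wtil1_factor b w om" "Wtil1_factor b w' om'"
    and "(om 0 + om 1) mod 3 = (om' 0 + om' 1) mod 3"
  shows "w 0 = w' 0 \<and> w 1 = w' 1 \<and> w 2 = w' 2 \<and> om 0 = om' 0 \<and> om 1 = om' 1"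
  using assms unfolding Wtil1_factor_def by auto

lemma Wtil1_factor_exists:
  "\<exists>w om. w permutes {..<3::nat} \<and> Wtil1_factor b w om \<and> om 2 = 0 \<and> (om 0 + om 1) mod 3 = m mod 3"
proof -
  define vec :: "int \<Rightarrow> int \<Rightarrow> nat \<Rightarrow> int" where
    "vec a c k = (if k = 0 then a else if k = 1 then c else 0)" for a c k
  have swap: "transpose a c permutes {..<3::nat}" if "a < 3" "c < 3" for a c
    using that by (intro permutes_swap_id) auto
  have cycles: "transpose 0 1 \<circ> transpose 1 2 permutes {..<3::nat}"
      "transpose 1 2 \<circ> transpose 0 1 permutes {..<3::nat}"
    by (simp_all add: permutes_compose swap)
  have "m mod 3 = 0 \<or> m mod 3 = 1 \<or> m mod 3 = 2" by arith
  then consider "\<not> b" "m mod 3 = 0" | "\<not> b" "m mod 3 = 2" | "\<not> b" "m mod 3 = 1"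
    | "b" "m mod 3 = 1" | "b" "m mod 3 = 2" | "b" "m mod 3 = 0"
    by blast
  then show ?thesis
  proof cases
    case 1 then show ?thesis
      by (intro exI[of _ id] exI[of _ "vec 0 0"]) (simp add: Wtil1_factor_def vec_def)
  next
    case 2 then show ?thesis using cycles(1)
      by (intro exI[of _ "transpose 0 1 \<circ> transpose 1 2"] exI[of _ "vec 1 1"])
        (simp add: Wtil1_factor_def vec_def)
  next
    case 3 then show ?thesis using cycles(2)
      by (intro exI[of _ "transpose 1 2 \<circ> transpose 0 1"] exI[of _ "vec 1 0"])
        (simp add: Wtil1_factor_def vec_def)
  next
    case 4 then show ?thesis using swap[of 1 2]
      by (intro exI[of _ "transpose 1 2"] exI[of _ "vec 0 1"]) (simp add: Wtil1_factor_def vec_def)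
  next
    case 5 then show ?thesis using swap[of 0 1]
      by (intro exI[of _ "transpose 0 1"] exI[of _ "vec 0 (-1)"]) (simp add: Wtil1_factor_def vec_def)
  next
    case 6 then show ?thesis using swap[of 0 2]
      by (intro exI[of _ "transpose 0 2"] exI[of _ "vec 2 1"]) (simp add: Wtil1_factor_def vec_def)
  qed
qed

(* X is one factor of x + eta, and b selects the alcove B (b = True) or A (b = False)
   of the P-dilated affine Weyl group. *)
definition in_alcove :: "real \<Rightarrow> bool \<Rightarrow> (nat \<Rightarrow> real) \<Rightarrow> bool" where
  "in_alcove P b X \<longleftrightarrow> (if b then X 0 - X 1 < P \<and> X 1 - X 2 < P \<and> P < X 0 - X 2
                         else 0 < X 0 - X 1 \<and> 0 < X 1 - X 2 \<and> X 0 - X 2 < P)"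

lemma in_alcove_Wtil1_factor_iff:
  assumes "Wtil1_factor b w om" "w permutes {..<3}" "om 2 = 0"
  shows "in_alcove P b (\<lambda>k. X (inv w k) - P * of_int (om (inv w k))) \<longleftrightarrow> in_alcove P False X"
  using permutes3_cases[OF assms(2)] assms(1,3) unfolding Wtil1_factor_def in_alcove_def
  by (elim disjE) (auto simp: algebra_simps)

lemma multiple_in_window:
  fixes P :: real and r n :: int
  assumes "0 < r - P * n" "r - P * n < P" "\<bar>r\<bar> < P"
  shows "n = (if 0 < r then 0 else -1)"
proof -
  have "-1 \<le> n"
  proof (rule ccontr)
    assume "\<not> -1 \<le> n"
    then have "P * n \<le> P * (-2)" using assms(3) by (intro mult_left_mono) auto
    then show False using assms by linarith
  qed
  moreover have "n \<le> 0"
  proof (rule ccontr)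
    assume "\<not> n \<le> 0"
    then have "P * 1 \<le> P * n" using assms(3) by (intro mult_left_mono) auto
    then show False using assms by linarith
  qed
  ultimately have "n = 0 \<or> n = -1" by linarith
  then show ?thesis using assms by auto
qed

lemma Wtil1_factor_of_in_alcove:
  fixes P :: real
  assumes w: "w permutes {..<3}" and P: "3 \<le> P" and om2: "om 2 = 0"
    and alc: "in_alcove P b (\<lambda>k. 1 - real (inv w k) - P * of_int (om (inv w k)))"
  shows "Wtil1_factor b w om"
proof -
  define Y where "Y k = 1 - real k - P * of_int (om k)" for k
  have step: "om a - om c = (if a < c then 0 else -1)"
    if "0 < Y a - Y c" "Y a - Y c < P" "a < 3" "c < 3" "a \<noteq> c" for a c
  proof -
    have "Y a - Y c = of_int (int c - int a) - P * of_int (om a - om c)"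
      by (simp add: Y_def algebra_simps)
    then show ?thesis
      using multiple_in_window[of "int c - int a" P "om a - om c"] that P by force
  qed
  have gaps: "0 < Y (inv w 0) - Y (inv w 1)" "Y (inv w 0) - Y (inv w 1) < P"
    "0 < Y (inv w 1) - Y (inv w 2)" "Y (inv w 1) - Y (inv w 2) < P"
    and top: "b \<longleftrightarrow> P < Y (inv w 0) - Y (inv w 2)"
    using alc unfolding in_alcove_def Y_def by (cases b; simp; linarith)+
  have "inv w k < 3" if "k < 3" for k using inv_permutes3_lt[OF w that] .
  moreover have "inv w 0 \<noteq> inv w 1" "inv w 1 \<noteq> inv w 2"
    using permutes_inj[OF permutes_inv[OF w]] by (simp_all add: inj_eq)
  ultimately have d1: "om (inv w 0) - om (inv w 1) = (if inv w 0 < inv w 1 then 0 else -1)"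
    and d2: "om (inv w 1) - om (inv w 2) = (if inv w 1 < inv w 2 then 0 else -1)"
    using step gaps by auto
  have top': "b \<longleftrightarrow> P < real (inv w 2) - real (inv w 0) - P * of_int (om (inv w 0) - om (inv w 2))"
    using top by (simp add: Y_def algebra_simps)
  show ?thesis
    using permutes3_cases[OF w] d1 d2 om2 top' P unfolding Wtil1_factor_def
    by (elim disjE) auto
qed

lemma Wgrp_permutes: "w \<in> Wgrp f \<Longrightarrow> i < f \<Longrightarrow> w i permutes {..<3}"
  by (simp add: Wgrp_def)

lemma Wgrp_fixes:
  assumes "w \<in> Wgrp f" and "f \<le> i \<or> 3 \<le> j"
  shows "w i j = j" and "inv (w i) j = j"
proof -
  have "w i j = j \<and> inv (w i) j = j"
  proof (cases "i < f")
    case True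
    then have "w i permutes {..<3}" using assms(1) by (simp add: Wgrp_def)
    then show ?thesis
      using assms(2) True by (simp add: permutes_not_in permutes_inv[THEN permutes_not_in])
  qed (use assms in \<open>simp add: Wgrp_def\<close>)
  then show "w i j = j" and "inv (w i) j = j" by simp_all
qed

lemma Wgrp_bij: "w \<in> Wgrp f \<Longrightarrow> bij (w i)"
  by (cases "i < f") (auto simp: Wgrp_def permutes_bij)

lemma eta_simps [simp]:
  "i < f \<Longrightarrow> eta f i 0 = 1" "i < f \<Longrightarrow> eta f i (Suc 0) = 0" "i < f \<Longrightarrow> eta f i 2 = -1"
  by (simp_all add: eta_def)

lemma neg_frobinv_Xw: "x \<in> Xw f \<Longrightarrow> (\<lambda>i j. - frobinv f x i j) \<in> Xw f"
  by (auto simp: frobinv_def Xw_def)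

lemma in_alcove_cong: "(\<And>k. k < 3 \<Longrightarrow> X k = X' k) \<Longrightarrow> in_alcove P b X = in_alcove P b X'"
  by (simp add: in_alcove_def)

lemma alc_iff: "alc f p c = {x \<in> Xr f. \<forall>i<f. in_alcove p (c i) (\<lambda>k. x i k + of_int (eta f i k))}"
  by (auto simp: alc_def in_alcove_def Let_def algebra_simps)

lemma alcA_iff: "alcA f p = {x \<in> Xr f. \<forall>i<f. in_alcove p False (\<lambda>k. x i k + of_int (eta f i k))}"
  by (simp add: alcA_def alc_iff)

lemma zero_in_alcA: "3 \<le> p \<Longrightarrow> (\<lambda>_ _. 0) \<in> alcA f p"
  by (simp add: alcA_iff Xr_def in_alcove_def)

lemma dotR_shifted:
  "dotR f p w l x i k + of_int (eta f i k) =
     x i (inv (w i) k) + of_int (eta f i (inv (w i) k)) + real p * of_int (l i (inv (w i) k))"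
  by (simp add: dotR_def wact_def)

lemma dotR_Xr:
  assumes "w \<in> Wgrp f" "l \<in> Xw f" "x \<in> Xr f"
  shows "dotR f p w l x \<in> Xr f"
  using assms Wgrp_fixes(2)[OF assms(1)] by (auto simp: Xr_def Xw_def eta_def dotR_def wact_def)

lemma dotR_inverse:
  assumes "w \<in> Wgrp f"
  shows "dotR f p w l (\<lambda>i j. y i (w i j) - real p * of_int (l i j) - of_int (eta f i j)
           + of_int (eta f i (w i j))) = y"
proof (intro ext)
  fix i j
  have "w i (inv (w i) j) = j" using Wgrp_bij[OF assms] by (simp add: bij_def surj_f_inv_f)
  then show "dotR f p w l (\<lambda>i j. y i (w i j) - real p * of_int (l i j) - of_int (eta f i j)
           + of_int (eta f i (w i j))) i j = y i j"
    by (simp add: dotR_def wact_def)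
qed

lemma in_alcove_dotR_iff:
  assumes i: "i < f" and w: "w \<in> Wgrp f" and om: "om \<in> LW f"
    and fac: "Wtil1_factor b (w i) (om ((i + 1) mod f))"
  shows "in_alcove p b (\<lambda>k. dotR f p w (\<lambda>i j. - frobinv f om i j) x i k + of_int (eta f i k))
     \<longleftrightarrow> in_alcove p False (\<lambda>k. x i k + of_int (eta f i k))"
proof -
  have "om ((i + 1) mod f) 2 = 0" using om by (simp add: LW_def)
  with fac Wgrp_permutes[OF w i] show ?thesis
    using in_alcove_Wtil1_factor_iff[where X = "\<lambda>k. x i k + of_int (eta f i k)" and P = "real p"]
    unfolding dotR_shifted by (simp add: frobinv_def i algebra_simps)
qed

lemma dotR_image_alcA:
  assumes w: "w \<in> Wgrp f" and om: "om \<in> LW f"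
    and fac: "\<forall>i<f. Wtil1_factor (c i) (w i) (om ((i + 1) mod f))"
  shows "dotR f p w (\<lambda>i j. - frobinv f om i j) ` alcA f p = alc f p c"
proof
  define l where "l = (\<lambda>i j. - frobinv f om i j)"
  have l: "l \<in> Xw f" using om by (simp add: l_def LW_def neg_frobinv_Xw)
  have iff: "in_alcove p (c i) (\<lambda>k. dotR f p w l x i k + of_int (eta f i k))
     \<longleftrightarrow> in_alcove p False (\<lambda>k. x i k + of_int (eta f i k))" if "i < f" for i x
    unfolding l_def using in_alcove_dotR_iff[OF that w om] fac that by blast
  show "dotR f p w l ` alcA f p \<subseteq> alc f p c"
  proof
    fix y assume "y \<in> dotR f p w l ` alcA f p"
    then obtain x where x: "x \<in> alcA f p" and y: "y = dotR f p w l x" by blast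
    have "x \<in> Xr f" using x by (simp add: alcA_iff)
    then have "y \<in> Xr f" unfolding y by (rule dotR_Xr[OF w l])
    moreover have "in_alcove p (c i) (\<lambda>k. y i k + of_int (eta f i k))" if "i < f" for i
      using iff[OF that, of x] x y that by (simp add: alcA_iff)
    ultimately show "y \<in> alc f p c" by (simp add: alc_iff)
  qed
  show "alc f p c \<subseteq> dotR f p w l ` alcA f p"
  proof
    fix y assume y: "y \<in> alc f p c"
    define x where "x = (\<lambda>i j. y i (w i j) - real p * of_int (l i j) - of_int (eta f i j)
           + of_int (eta f i (w i j)))"
    have dx: "dotR f p w l x = y" unfolding x_def by (rule dotR_inverse[OF w])
    have "x \<in> Xr f"
      unfolding Xr_def
    proof (intro CollectI allI impI)
      fix i j :: nat assume "f \<le> i \<or> 3 \<le> j"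
      then show "x i j = 0"
        using y l Wgrp_fixes(1)[OF w] by (auto simp: x_def alc_iff Xr_def Xw_def eta_def)
    qed
    moreover have "in_alcove p False (\<lambda>k. x i k + of_int (eta f i k))" if "i < f" for i
      using iff[OF that, of x] y dx that by (simp add: alc_iff)
    ultimately have "x \<in> alcA f p" by (simp add: alcA_iff)
    then show "y \<in> dotR f p w l ` alcA f p" using dx by blast
  qed
qed

lemma Wtil1_factor_of_dotR_image:
  assumes p: "3 \<le> p" and i: "i < f" and w: "w \<in> Wgrp f" and om: "om \<in> LW f"
    and img: "dotR f p w (\<lambda>i j. - frobinv f om i j) ` alcA f p = alc f p c"
  shows "Wtil1_factor (c i) (w i) (om ((i + 1) mod f))"
proof -
  have wp: "w i permutes {..<3}" using Wgrp_permutes[OF w i] .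
  (* the image of the single point 0 of A already pins down the table entry *)
  have "dotR f p w (\<lambda>i j. - frobinv f om i j) (\<lambda>_ _. 0) \<in> alc f p c"
    using img zero_in_alcA[OF p] by blast
  then have "in_alcove p (c i) (\<lambda>k. dotR f p w (\<lambda>i j. - frobinv f om i j) (\<lambda>_ _. 0) i k
      + of_int (eta f i k))"
    using i by (simp add: alc_iff)
  also have "?this \<longleftrightarrow> in_alcove p (c i)
      (\<lambda>k. 1 - real (inv (w i) k) - real p * of_int (om ((i + 1) mod f) (inv (w i) k)))"
    using inv_permutes3_lt[OF wp] i
    unfolding dotR_shifted by (intro in_alcove_cong) (simp add: frobinv_def eta_def)
  finally show ?thesis
    using Wtil1_factor_of_in_alcove[OF wp, of "real p" "om ((i + 1) mod f)"] p om
    by (simp add: LW_def)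
qed

lemma dotR_image_alcA_iff:
  assumes "3 \<le> p" "w \<in> Wgrp f" "om \<in> LW f"
  shows "dotR f p w (\<lambda>i j. - frobinv f om i j) ` alcA f p = alc f p c \<longleftrightarrow>
    (\<forall>i<f. Wtil1_factor (c i) (w i) (om ((i + 1) mod f)))"
proof
  show "dotR f p w (\<lambda>i j. - frobinv f om i j) ` alcA f p = alc f p c \<Longrightarrow>
      \<forall>i<f. Wtil1_factor (c i) (w i) (om ((i + 1) mod f))"
    using Wtil1_factor_of_dotR_image[OF assms(1) _ assms(2,3)] by blast
qed (rule dotR_image_alcA[OF assms(2,3)])

lemma frobinv_frob: "frobinv f (frob f x) = x"
  by (intro ext) (simp add: frob_def frobinv_def)

lemma frob_frobinv: "frob f (frobinv f x) = x"
  by (intro ext) (simp add: frob_def frobinv_def)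

lemma inj_frob: "inj (frob f)"
  by (metis frobinv_frob injI)

lemma frob_image_alc: "frob f ` alc f p (\<lambda>i. c ((i + 1) mod f)) = alc f p c"
proof
  show "frob f ` alc f p (\<lambda>i. c ((i + 1) mod f)) \<subseteq> alc f p c"
  proof
    fix y assume "y \<in> frob f ` alc f p (\<lambda>i. c ((i + 1) mod f))"
    then obtain x where x: "x \<in> alc f p (\<lambda>i. c ((i + 1) mod f))" and y: "y = frob f x"
      by blast
    have "in_alcove p (c i) (\<lambda>k. y i k + of_int (eta f i k))" if i: "i < f" for i
      using x pred_mod_lt[OF i] unfolding alc_iff
      by (auto simp: y frob_def i eta_def)
    then show "y \<in> alc f p c"
      using x by (auto simp: alc_iff Xr_def y frob_def)
  qed
  show "alc f p c \<subseteq> frob f ` alc f p (\<lambda>i. c ((i + 1) mod f))"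
  proof
    fix y assume y: "y \<in> alc f p c"
    have "in_alcove p (c ((i + 1) mod f)) (\<lambda>k. frobinv f y i k + of_int (eta f i k))"
      if i: "i < f" for i
      using y succ_mod_lt[OF i] unfolding alc_iff
      by (auto simp: frobinv_def i eta_def)
    then have "frobinv f y \<in> alc f p (\<lambda>i. c ((i + 1) mod f))"
      using y by (auto simp: alc_iff Xr_def frobinv_def)
    then show "y \<in> frob f ` alc f p (\<lambda>i. c ((i + 1) mod f))"
      by (metis frob_frobinv image_eqI)
  qed
qed

lemma Wgrp_eqI:
  assumes "w \<in> Wgrp f" "w' \<in> Wgrp f" and "\<And>i. i < f \<Longrightarrow> w i 0 = w' i 0 \<and> w i 1 = w' i 1 \<and> w i 2 = w' i 2"
  shows "w = w'"
proof (intro ext)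
  fix i j :: nat
  show "w i j = w' i j"
  proof (cases "i < f \<and> j < 3")
    case True
    then have "j = 0 \<or> j = 1 \<or> j = 2" by arith
    then show ?thesis using assms(3) True by auto
  next
    case False
    then show ?thesis using Wgrp_fixes(1)[OF assms(1)] Wgrp_fixes(1)[OF assms(2)] by auto
  qed
qed

lemma LW_eqI:
  assumes "om \<in> LW f" "om' \<in> LW f" and "\<And>i. i < f \<Longrightarrow> om i 0 = om' i 0 \<and> om i 1 = om' i 1"
  shows "om = om'"
proof (intro ext)
  fix i j :: nat
  show "om i j = om' i j"
  proof (cases "i < f \<and> j < 2")
    case True
    then have "j = 0 \<or> j = 1" by arith
    then show ?thesis using assms(3) True by auto
  next
    case False
    then have "f \<le> i \<or> 3 \<le> j \<or> j = 2" by arith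
    then show ?thesis using assms(1,2) by (auto simp: LW_def Xw_def)
  qed
qed

lemma LR_add_mod3:
  fixes om :: "nat \<Rightarrow> nat \<Rightarrow> int"
  assumes "nu \<in> LR f" "i < f"
  shows "(om i 0 + nu i 0 + (om i 1 + nu i 1)) mod 3 = (om i 0 + om i 1) mod 3"
proof -
  have "3 dvd nu i 0 + nu i 1" using assms unfolding LR_def by blast
  then show ?thesis by presburger
qed

definition decomposes :: "nat \<Rightarrow> nat \<Rightarrow> (nat \<Rightarrow> nat \<Rightarrow> int) \<Rightarrow> (nat \<Rightarrow> nat \<Rightarrow> real) set
    \<Rightarrow> (nat \<Rightarrow> nat \<Rightarrow> int) \<times> (nat \<Rightarrow> nat \<Rightarrow> int) \<times> (nat \<Rightarrow> nat \<Rightarrow> nat) \<Rightarrow> bool" where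
  "decomposes f p om' C = (\<lambda>(om, nu, w). nu \<in> LR f \<and> (w, om) \<in> Wtil1 f p \<and>
      om' = (\<lambda>i j. om i j + nu i j) \<and>
      C = frob f ` (dotR f p w (\<lambda>i j. - frobinv f om i j) ` alcA f p))"

lemma decomp_eq_The: "decomp f p om' C = The (decomposes f p om' C)"
  unfolding decomp_def decomposes_def ..

lemma decomposes_alc_iff:
  assumes p: "3 \<le> p"
  shows "decomposes f p om' (alc f p c) (om, nu, w) \<longleftrightarrow>
    nu \<in> LR f \<and> w \<in> Wgrp f \<and> om \<in> LW f \<and> om' = (\<lambda>i j. om i j + nu i j) \<and>
    (\<forall>i<f. Wtil1_factor (c ((i + 1) mod f)) (w i) (om ((i + 1) mod f)))"
proof -
  let ?img = "dotR f p w (\<lambda>i j. - frobinv f om i j) ` alcA f p"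
  have "alc f p c = frob f ` ?img \<longleftrightarrow> ?img = alc f p (\<lambda>i. c ((i + 1) mod f))"
    using inj_image_eq_iff[OF inj_frob] frob_image_alc by metis
  moreover have "?img = alc f p (\<lambda>i. c ((i + 1) mod f)) \<longleftrightarrow>
      (\<forall>i<f. Wtil1_factor (c ((i + 1) mod f)) (w i) (om ((i + 1) mod f)))"
    if "w \<in> Wgrp f" "om \<in> LW f"
    using dotR_image_alcA_iff[OF p that] .
  ultimately show ?thesis
    unfolding decomposes_def Wtil1_def Acal_def by auto
qed

lemma decomposes_unique:
  assumes "3 \<le> p"
    and "decomposes f p om' (alc f p c) d" "decomposes f p om' (alc f p c) d'"
  shows "d = d'"
proof -
  obtain om nu w om2 nu2 w2 where d: "d = (om, nu, w)" and d': "d' = (om2, nu2, w2)"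
    by (cases d, cases d') auto
  note D = assms(2)[unfolded d decomposes_alc_iff[OF assms(1)]]
    and D' = assms(3)[unfolded d' decomposes_alc_iff[OF assms(1)]]
  have same: "w i 0 = w2 i 0 \<and> w i 1 = w2 i 1 \<and> w i 2 = w2 i 2
      \<and> om ((i + 1) mod f) 0 = om2 ((i + 1) mod f) 0 \<and> om ((i + 1) mod f) 1 = om2 ((i + 1) mod f) 1"
    if i: "i < f" for i
  proof (rule Wtil1_factor_unique)
    show "Wtil1_factor (c ((i + 1) mod f)) (w i) (om ((i + 1) mod f))"
      "Wtil1_factor (c ((i + 1) mod f)) (w2 i) (om2 ((i + 1) mod f))"
      using D D' i by auto
    let ?r = "(i + 1) mod f"
    have "om ?r j + nu ?r j = om2 ?r j + nu2 ?r j" for j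
      using D D' by metis
    then show "(om ?r 0 + om ?r 1) mod 3 = (om2 ?r 0 + om2 ?r 1) mod 3"
      using LR_add_mod3[of nu f ?r om] LR_add_mod3[of nu2 f ?r om2] D D' i by simp
  qed
  have "w = w2" using D D' same by (intro Wgrp_eqI) auto
  moreover have "om = om2"
  proof (rule LW_eqI)
    fix k assume k: "k < f"
    then show "om k 0 = om2 k 0 \<and> om k 1 = om2 k 1"
      using same[OF pred_mod_lt[OF k]] by simp
  qed (use D D' in auto)
  moreover have "nu = nu2"
    using D D' \<open>om = om2\<close> by (metis add_left_cancel ext)
  ultimately show ?thesis using d d' by simp
qed

lemma decomposes_exists:
  assumes p: "3 \<le> p" and om': "om' \<in> LW f"
  shows "\<exists>d. decomposes f p om' (alc f p c) d"
proof -
  have "\<forall>i. \<exists>v u. v permutes {..<3} \<and> Wtil1_factor (c ((i + 1) mod f)) v u \<and> u 2 = 0 \<and>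
      (u 0 + u 1) mod 3 = (om' ((i + 1) mod f) 0 + om' ((i + 1) mod f) 1) mod 3"
    using Wtil1_factor_exists by blast
  then obtain W U where WO: "\<And>i. W i permutes {..<3} \<and>
      Wtil1_factor (c ((i + 1) mod f)) (W i) (U i) \<and> U i 2 = 0 \<and>
      (U i 0 + U i 1) mod 3 = (om' ((i + 1) mod f) 0 + om' ((i + 1) mod f) 1) mod 3"
    by metis
  define w where "w i = (if i < f then W i else id)" for i
  define om where "om k j = (if k < f \<and> j < 2 then U ((k + f - 1) mod f) j else 0)" for k j :: nat
  define nu where "nu i j = om' i j - om i j" for i j
  have w: "w \<in> Wgrp f" using WO by (simp add: Wgrp_def w_def)
  have om: "om \<in> LW f" by (simp add: LW_def Xw_def om_def)
  have "3 dvd nu k 0 + nu k 1" if k: "k < f" for k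
  proof -
    have "(U ((k + f - 1) mod f) 0 + U ((k + f - 1) mod f) 1) mod 3 = (om' k 0 + om' k 1) mod 3"
      using WO[of "(k + f - 1) mod f"] k by simp
    moreover have "nu k 0 + nu k 1 = (om' k 0 + om' k 1)
        - (U ((k + f - 1) mod f) 0 + U ((k + f - 1) mod f) 1)"
      using k by (simp add: nu_def om_def)
    ultimately show ?thesis by presburger
  qed
  then have nu: "nu \<in> LR f"
    using om' om by (auto simp: LR_def LW_def Xw_def nu_def)
  have "\<forall>i<f. Wtil1_factor (c ((i + 1) mod f)) (w i) (om ((i + 1) mod f))"
    using WO by (simp add: w_def om_def Wtil1_factor_def)
  then have "decomposes f p om' (alc f p c) (om, nu, w)"
    using nu w om by (simp add: decomposes_alc_iff[OF p] nu_def)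
  then show ?thesis by blast
qed

lemma decomp_decomposes:
  assumes "3 \<le> p" "om' \<in> LW f"
  shows "decomposes f p om' (alc f p c) (decomp f p om' (alc f p c))"
  unfolding decomp_eq_The
  using decomposes_exists[OF assms] decomposes_unique[OF assms(1)] by (metis theI)

definition Trns_rep :: "nat \<Rightarrow> nat \<Rightarrow> (nat \<Rightarrow> nat \<Rightarrow> int) \<Rightarrow> (nat \<Rightarrow> nat \<Rightarrow> int)
    \<Rightarrow> (nat \<Rightarrow> nat \<Rightarrow> int) \<Rightarrow> (nat \<Rightarrow> nat \<Rightarrow> nat) \<Rightarrow> nat \<Rightarrow> nat \<Rightarrow> int" where
  "Trns_rep f p mu s nu w = dot f p w (\<lambda>i j. - frobinv f s i j)
     (\<lambda>i j. mu i j - eta f i j + can f nu i j + s i j)"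

lemma Trns_alcE:
  assumes "3 \<le> p" "om' \<in> LW f"
  obtains om nu w where "nu \<in> LR f" "w \<in> Wgrp f" "om \<in> LW f" "om' = (\<lambda>i j. om i j + nu i j)"
    "\<forall>i<f. Wtil1_factor (c ((i + 1) mod f)) (w i) (om ((i + 1) mod f))"
    "Trns f p sec mu (om', alc f p c) = cls f p (Trns_rep f p mu (sec om) nu w)"
proof -
  obtain om nu w where d: "decomp f p om' (alc f p c) = (om, nu, w)"
    by (cases "decomp f p om' (alc f p c)") auto
  then have "decomposes f p om' (alc f p c) (om, nu, w)"
    using decomp_decomposes[OF assms, of c] by simp
  moreover have "Trns f p sec mu (om', alc f p c) = cls f p (Trns_rep f p mu (sec om) nu w)"
    using d by (simp add: Trns_def Trns_rep_def)
  ultimately show thesis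
    using that decomposes_alc_iff[OF assms(1)] by blast
qed

lemma in_alcove_add_const: "in_alcove P b (\<lambda>k. X k + d) = in_alcove P b X"
  by (simp add: in_alcove_def)

lemma not_dvd_between_multiples:
  fixes P x :: int
  assumes "P * n < x" "x < P * (n + 1)"
  shows "\<not> P dvd x"
proof
  assume "P dvd x"
  then obtain m where "x = P * m" by (auto elim: dvdE)
  then show False
    using assms mult_less_cancel_left[of P n m] mult_less_cancel_left[of P m "n + 1"] by auto
qed

lemma in_alcove_int_iff:
  fixes X :: "nat \<Rightarrow> int"
  shows "(\<exists>b. in_alcove (of_int P) b (\<lambda>k. of_int (X k))) \<longleftrightarrow>
    0 < X 0 - X 1 \<and> X 0 - X 1 < P \<and> 0 < X 1 - X 2 \<and> X 1 - X 2 < P \<and> \<not> P dvd (X 0 - X 2)"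
    (is "?L \<longleftrightarrow> ?R")
proof -
  have alc: "in_alcove (of_int P) b (\<lambda>k. of_int (X k)) \<longleftrightarrow>
      (if b then X 0 - X 1 < P \<and> X 1 - X 2 < P \<and> P < X 0 - X 2
       else 0 < X 0 - X 1 \<and> 0 < X 1 - X 2 \<and> X 0 - X 2 < P)" for b
    unfolding in_alcove_def by (simp flip: of_int_diff)
  show ?thesis
  proof
    assume ?L
    then obtain b where b: "in_alcove (of_int P) b (\<lambda>k. of_int (X k))" ..
    show ?R
    proof (cases b)
      case True
      then have "P * 1 < X 0 - X 2" "X 0 - X 2 < P * (1 + 1)" using b alc by auto
      then show ?thesis using b alc True not_dvd_between_multiples[of P 1 "X 0 - X 2"] by auto
    next
      case False
      then have "P * 0 < X 0 - X 2" "X 0 - X 2 < P * (0 + 1)" using b alc by auto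
      then show ?thesis using b alc False not_dvd_between_multiples[of P 0 "X 0 - X 2"] by auto
    qed
  next
    assume R: ?R
    then have "X 0 - X 2 \<noteq> P" by auto
    then have "in_alcove (of_int P) (P < X 0 - X 2) (\<lambda>k. of_int (X k))" using R alc by auto
    then show ?L ..
  qed
qed

lemma X1_p_regular_iff:
  "lam \<in> X1 f p \<and> p_regular f p lam \<longleftrightarrow>
     lam \<in> Xw f \<and> (\<forall>i<f. \<exists>b. in_alcove p b (\<lambda>k. of_int (lam i k + eta f i k)))"
proof -
  have factor: "(0 \<le> lam i 0 - lam i 1 \<and> lam i 0 - lam i 1 \<le> int p - 1
        \<and> 0 \<le> lam i 1 - lam i 2 \<and> lam i 1 - lam i 2 \<le> int p - 1) \<and>
      (\<forall>j k. j < k \<and> k < 3 \<longrightarrow> \<not> int p dvd (lam i j + eta f i j - (lam i k + eta f i k)))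
      \<longleftrightarrow> (\<exists>b. in_alcove p b (\<lambda>k. of_int (lam i k + eta f i k)))" if i: "i < f" for i
  proof -
    have "j < k \<and> k < 3 \<longleftrightarrow> (j, k) \<in> {(0, 1), (0, 2), (1, 2)}" for j k :: nat by auto
    then have pairs: "(\<forall>j k. j < k \<and> k < 3 \<longrightarrow>
          \<not> int p dvd (lam i j + eta f i j - (lam i k + eta f i k))) \<longleftrightarrow>
        \<not> int p dvd (lam i 0 - lam i 1 + 1) \<and> \<not> int p dvd (lam i 1 - lam i 2 + 1)
        \<and> \<not> int p dvd (lam i 0 - lam i 2 + 2)"
      using i by (auto simp: algebra_simps)
    have alc: "(\<exists>b. in_alcove p b (\<lambda>k. of_int (lam i k + eta f i k))) \<longleftrightarrow>
        0 < lam i 0 - lam i 1 + 1 \<and> lam i 0 - lam i 1 + 1 < int p \<and>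
        0 < lam i 1 - lam i 2 + 1 \<and> lam i 1 - lam i 2 + 1 < int p \<and>
        \<not> int p dvd (lam i 0 - lam i 2 + 2)"
      using in_alcove_int_iff[of "int p" "\<lambda>k. lam i k + eta f i k"] i
      by (simp only: of_int_of_nat_eq) (simp add: algebra_simps)
    have "x < int p" if "x \<le> int p" "\<not> int p dvd x" for x
      using that by (cases "x = int p") auto
    then show ?thesis
      unfolding pairs alc using zdvd_not_zless[of _ "int p"] by auto
  qed
  show ?thesis
  proof
    assume L: "lam \<in> X1 f p \<and> p_regular f p lam"
    have "\<exists>b. in_alcove p b (\<lambda>k. of_int (lam i k + eta f i k))" if i: "i < f" for i
      using L i unfolding X1_def p_regular_def factor[OF i, symmetric] by blast
    then show "lam \<in> Xw f \<and> (\<forall>i<f. \<exists>b. in_alcove p b (\<lambda>k. of_int (lam i k + eta f i k)))"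
      using L by (simp add: X1_def)
  next
    assume R: "lam \<in> Xw f \<and> (\<forall>i<f. \<exists>b. in_alcove p b (\<lambda>k. of_int (lam i k + eta f i k)))"
    then show "lam \<in> X1 f p \<and> p_regular f p lam"
      unfolding X1_def p_regular_def using factor by simp
  qed
qed

lemma in_alcove_int_three_le:
  fixes X :: "nat \<Rightarrow> int"
  assumes "in_alcove (real p) b (\<lambda>k. of_int (X k))"
  shows "3 \<le> p"
proof -
  have bounds: "0 < X 0 - X 1" "X 0 - X 1 < int p" "0 < X 1 - X 2" "X 1 - X 2 < int p"
    and regular: "\<not> int p dvd (X 0 - X 2)"
    using assms in_alcove_int_iff[of "int p" X] by (simp only: of_int_of_nat_eq, blast)+
  have "p \<noteq> 2"
  proof
    assume "p = 2"
    then have "X 0 - X 2 = int p" using bounds by linarith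
    then show False using regular by simp
  qed
  then show ?thesis using bounds by linarith
qed

lemma LWmu_iff:
  "om' \<in> LWmu f p mu \<longleftrightarrow>
     om' \<in> LW f \<and> (\<forall>i<f. in_alcove p False (\<lambda>k. of_int (mu i k + om' i k)))"
proof -
  have factor: "in_alcove p False (\<lambda>k. real_of_int (om' i k + res f (\<lambda>i' j'. mu i' j' - eta f i' j') i k)
      + of_int (eta f i k)) \<longleftrightarrow> in_alcove p False (\<lambda>k. of_int (mu i k + om' i k))" if i: "i < f" for i
  proof -
    have "in_alcove p False (\<lambda>k. real_of_int (om' i k + res f (\<lambda>i' j'. mu i' j' - eta f i' j') i k)
        + of_int (eta f i k)) \<longleftrightarrow>
        in_alcove p False (\<lambda>k. of_int (mu i k + om' i k) + of_int (eta f i 2 - mu i 2))"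
      using i by (intro in_alcove_cong) (simp add: res_def algebra_simps)
    then show ?thesis by (simp only: in_alcove_add_const)
  qed
  moreover have "(\<lambda>i j. real_of_int (om' i j + res f (\<lambda>i' j'. mu i' j' - eta f i' j') i j)) \<in> Xr f"
    if "om' \<in> LW f"
    using that by (simp add: LW_def Xw_def Xr_def res_def)
  ultimately show ?thesis
    unfolding LWmu_def alcA_iff mem_Collect_eq by blast

qed

lemma sum_lessThan_3: "(\<Sum>j<3::nat. g j) = g 0 + g 1 + (g 2 :: 'a :: comm_monoid_add)"
  by (simp add: numeral_3_eq_3 lessThan_Suc numeral_2_eq_2 add.commute add.left_commute)

lemma resZ_dot:
  assumes "w \<in> Wgrp f" "i < f"
  shows "resZ f (dot f p w l m) i = resZ f m i + int p * resZ f l i"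
proof -
  define h where "h k = m i k + int p * l i k + eta f i k" for k
  have perm: "inv (w i) permutes {..<3}" using Wgrp_permutes[OF assms] by (rule permutes_inv)
  have "resZ f (dot f p w l m) i = (\<Sum>j<3. h (inv (w i) j)) - (\<Sum>j<3. eta f i j)"
    using assms(2) by (simp add: resZ_def dot_def wact_def h_def sum_subtractf)
  also have "\<dots> = (\<Sum>j<3. h j) - (\<Sum>j<3. eta f i j)"
    using sum.permute[OF perm, of h] by simp
  also have "\<dots> = resZ f m i + int p * resZ f l i"
    using assms(2) by (simp add: h_def resZ_def sum.distrib sum_distrib_left)
  finally show ?thesis .
qed

lemma dot_Xw:
  assumes "w \<in> Wgrp f" "l \<in> Xw f" "m \<in> Xw f"
  shows "dot f p w l m \<in> Xw f"
  using assms Wgrp_fixes(2)[OF assms(1)] by (auto simp: Xw_def eta_def dot_def wact_def)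

lemma Trns_rep_Xw:
  assumes "w \<in> Wgrp f" "mu \<in> Xw f" "s \<in> Xw f"
  shows "Trns_rep f p mu s nu w \<in> Xw f"
  unfolding Trns_rep_def using assms
  by (intro dot_Xw neg_frobinv_Xw) (auto simp: Xw_def eta_def can_def)

lemma res_eqD:
  assumes "res f s = om" "i < f" "k < 3"
  shows "s i k = om i k + s i 2"
  using fun_cong[OF fun_cong[OF assms(1)], of i k] assms(2,3) by (simp add: res_def)

lemma Trns_rep_shifted:
  assumes w: "w \<in> Wgrp f" and nu: "nu \<in> LR f" and s: "res f s = om"
    and i: "i < f" and j: "j < 3"
  shows "Trns_rep f p mu s nu w i j + eta f i j =
    mu i (inv (w i) j) + om i (inv (w i) j) + nu i (inv (w i) j)
      - int p * om ((i + 1) mod f) (inv (w i) j)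
      + (s i 2 - (nu i 0 + nu i 1) div 3 - int p * s ((i + 1) mod f) 2)"
proof -
  define k where "k = inv (w i) j"
  have k: "k < 3" unfolding k_def by (rule inv_permutes3_lt[OF Wgrp_permutes[OF w i] j])
  have "nu i 2 = 0" using nu by (simp add: LR_def LW_def)
  then show ?thesis
    using res_eqD[OF s i k] res_eqD[OF s succ_mod_lt[OF i] k] i k
    unfolding k_def[symmetric]
    by (simp add: Trns_rep_def dot_def wact_def frobinv_def can_def k_def algebra_simps)
qed

lemma resZ_Trns_rep:
  assumes w: "w \<in> Wgrp f" and nu: "nu \<in> LR f" and i: "i < f"
  shows "resZ f (Trns_rep f p mu s nu w) i = resZ f mu i + resZ f s i - int p * resZ f s ((i + 1) mod f)"
proof -
  have "nu i 2 = 0" "3 dvd nu i 0 + nu i 1" using nu i by (auto simp: LR_def LW_def)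
  then have "resZ f (can f nu) i = 0"
    using i by (auto simp: resZ_def can_def sum_lessThan_3 elim!: dvdE)
  moreover have "resZ f (Trns_rep f p mu s nu w) i
      = resZ f (\<lambda>i j. mu i j - eta f i j + can f nu i j + s i j) i
        + int p * resZ f (\<lambda>i j. - frobinv f s i j) i"
    unfolding Trns_rep_def by (rule resZ_dot[OF w i])
  ultimately show ?thesis
    using i succ_mod_lt[OF i] by (simp add: resZ_def sum_lessThan_3 frobinv_def algebra_simps)
qed

lemma in_pmpiZ_Trns_rep:
  assumes w: "w \<in> Wgrp f" and nu: "nu \<in> LR f"
  shows "in_pmpiZ f p (resZ f (\<lambda>i j. Trns_rep f p mu s nu w i j - mu i j + eta f i j))"
  unfolding in_pmpiZ_def
proof (intro exI allI impI)
  fix i assume i: "i < f"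
  have "resZ f (\<lambda>i j. Trns_rep f p mu s nu w i j - mu i j + eta f i j) i
      = resZ f (Trns_rep f p mu s nu w) i - resZ f mu i"
    using i by (simp add: resZ_def sum_lessThan_3)
  also have "\<dots> = int p * (- resZ f s ((i + 1) mod f)) - (- resZ f s (((i + f - 1) mod f + 1) mod f))"
    using resZ_Trns_rep[OF w nu i] i by simp
  finally show "resZ f (\<lambda>i j. Trns_rep f p mu s nu w i j - mu i j + eta f i j) i
      = int p * (- resZ f s ((i + 1) mod f)) - (- resZ f s (((i + f - 1) mod f + 1) mod f))" .
qed

lemma in_alcove_Trns_rep_iff:
  assumes w: "w \<in> Wgrp f" and nu: "nu \<in> LR f" and s: "res f s = om" and om: "om \<in> LW f"
    and i: "i < f" and fac: "Wtil1_factor b (w i) (om ((i + 1) mod f))"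
  shows "in_alcove p b (\<lambda>k. of_int (Trns_rep f p mu s nu w i k + eta f i k))
     \<longleftrightarrow> in_alcove p False (\<lambda>k. of_int (mu i k + om i k + nu i k))"
proof -
  let ?r = "(i + 1) mod f"
  define d where "d = s i 2 - (nu i 0 + nu i 1) div 3 - int p * s ?r 2"
  define X :: "nat \<Rightarrow> real" where "X = (\<lambda>k. of_int (mu i k + om i k + nu i k + d))"
  have "in_alcove p b (\<lambda>k. of_int (Trns_rep f p mu s nu w i k + eta f i k))
      \<longleftrightarrow> in_alcove p b (\<lambda>k. X (inv (w i) k) - real p * of_int (om ?r (inv (w i) k)))"
    by (intro in_alcove_cong) (simp add: Trns_rep_shifted[OF w nu s i] X_def d_def)
  also have "\<dots> \<longleftrightarrow> in_alcove p False X"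
    using in_alcove_Wtil1_factor_iff[OF fac Wgrp_permutes[OF w i]] om by (simp add: LW_def)
  also have "\<dots> \<longleftrightarrow> in_alcove p False (\<lambda>k. of_int (mu i k + om i k + nu i k))"
    unfolding X_def of_int_add by (rule in_alcove_add_const)
  finally show ?thesis .
qed

lemma Trns_image_subset:
  assumes f: "1 \<le> f" and mu: "mu \<in> Xw f"
    and sec: "\<forall>om \<in> LW f. sec om \<in> Xw f \<and> res f (sec om) = om"
    and om': "om' \<in> LWmu f p mu" and C: "C \<in> Acal f p"
  shows "\<exists>lam. Trns f p sec mu (om', C) = cls f p lam \<and> lam \<in> X1 f p \<and> p_regular f p lam \<and>
    in_pmpiZ f p (resZ f (\<lambda>i j. lam i j - mu i j + eta f i j))"
proof -
  have LW: "om' \<in> LW f" and alc: "\<forall>i<f. in_alcove p False (\<lambda>k. of_int (mu i k + om' i k))"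
    using om' by (simp_all add: LWmu_iff)
  have p: "3 \<le> p"
    using alc f by (intro in_alcove_int_three_le[of p False "\<lambda>k. mu 0 k + om' 0 k"]) simp
  obtain c where C: "C = alc f p c" using C by (auto simp: Acal_def)
  obtain om nu w where nu: "nu \<in> LR f" and w: "w \<in> Wgrp f" and om: "om \<in> LW f"
    and om'_eq: "om' = (\<lambda>i j. om i j + nu i j)"
    and fac: "\<forall>i<f. Wtil1_factor (c ((i + 1) mod f)) (w i) (om ((i + 1) mod f))"
    and T: "Trns f p sec mu (om', alc f p c) = cls f p (Trns_rep f p mu (sec om) nu w)"
    by (rule Trns_alcE[OF p LW])
  have s: "sec om \<in> Xw f" "res f (sec om) = om" using sec om by auto
  let ?Lam = "Trns_rep f p mu (sec om) nu w"
  have "\<exists>b. in_alcove p b (\<lambda>k. of_int (?Lam i k + eta f i k))" if i: "i < f" for i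
    using in_alcove_Trns_rep_iff[OF w nu s(2) om i] fac alc om'_eq i
    by (intro exI[of _ "c ((i + 1) mod f)"]) (simp add: add.assoc)
  then have "?Lam \<in> X1 f p \<and> p_regular f p ?Lam"
    using Trns_rep_Xw[OF w mu s(1)] by (simp add: X1_p_regular_iff)
  then show ?thesis using T in_pmpiZ_Trns_rep[OF w nu] unfolding C by blast
qed

lemma pmpi_add: "pmpi f p (\<lambda>i j. a i j + b i j) = (\<lambda>i j. pmpi f p a i j + pmpi f p b i j)"
  by (intro ext) (simp add: pmpi_def frob_def algebra_simps)

lemma pmpi_diff: "pmpi f p (\<lambda>i j. a i j - b i j) = (\<lambda>i j. pmpi f p a i j - pmpi f p b i j)"
  by (intro ext) (simp add: pmpi_def frob_def algebra_simps)

lemma cls_eq: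
  assumes z: "z \<in> X0 f" and d: "(\<lambda>i j. x i j - x' i j) = pmpi f p z"
  shows "cls f p x = cls f p x'"
proof (intro set_eqI iffI)
  fix y assume "y \<in> cls f p x"
  then obtain z' where y: "y \<in> Xw f" and z': "z' \<in> X0 f" and e: "(\<lambda>i j. y i j - x i j) = pmpi f p z'"
    unfolding cls_def by blast
  have "(\<lambda>i j. y i j - x' i j) = pmpi f p (\<lambda>i j. z' i j + z i j)"
    unfolding pmpi_add using fun_cong[OF fun_cong[OF e]] fun_cong[OF fun_cong[OF d]]
    by (intro ext) (simp add: algebra_simps)
  moreover have "(\<lambda>i j. z' i j + z i j) \<in> X0 f" using z z' by (simp add: X0_def Xw_def)
  ultimately show "y \<in> cls f p x'" using y unfolding cls_def by blast
next
  fix y assume "y \<in> cls f p x'"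
  then obtain z' where y: "y \<in> Xw f" and z': "z' \<in> X0 f" and e: "(\<lambda>i j. y i j - x' i j) = pmpi f p z'"
    unfolding cls_def by blast
  have "(\<lambda>i j. y i j - x i j) = pmpi f p (\<lambda>i j. z' i j - z i j)"
    unfolding pmpi_diff using fun_cong[OF fun_cong[OF e]] fun_cong[OF fun_cong[OF d]]
    by (intro ext) (simp add: algebra_simps)
  moreover have "(\<lambda>i j. z' i j - z i j) \<in> X0 f" using z z' by (simp add: X0_def Xw_def)
  ultimately show "y \<in> cls f p x" using y unfolding cls_def by blast
qed

lemma cls_eq_of_factorwise_diff:
  assumes "x \<in> Xw f" "x' \<in> Xw f"
    and diff: "\<And>i j. i < f \<Longrightarrow> j < 3 \<Longrightarrow> x i j - x' i j = Q i - int p * Q ((i + 1) mod f)"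
  shows "cls f p x = cls f p x'"
proof (rule cls_eq)
  define z where "z i j = (if i < f \<and> j < 3 then - Q ((i + 1) mod f) else 0)" for i j :: nat
  show "z \<in> X0 f" by (simp add: X0_def Xw_def z_def)
  show "(\<lambda>i j. x i j - x' i j) = pmpi f p z"
  proof (intro ext)
    fix i j :: nat
    show "x i j - x' i j = pmpi f p z i j"
      using assms diff[of i j] by (cases "i < f \<and> j < 3") (auto simp: pmpi_def frob_def z_def Xw_def)
  qed
qed

lemma sum_permutes3: "w permutes {..<3::nat} \<Longrightarrow> (\<Sum>k<3. g (w k)) = (\<Sum>k<3. g k)"
  using sum.permute[of w "{..<3}" g] by simp

lemma in_alcove_lift_iff:
  fixes X Y U :: "nat \<Rightarrow> int"
  assumes W: "W permutes {..<3}" and fac: "Wtil1_factor b W U" and U2: "U 2 = 0"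
    and Y: "\<And>k. k < 3 \<Longrightarrow> Y k = X (W k) + int p * U k + c"
  shows "in_alcove p False (\<lambda>k. of_int (Y k)) \<longleftrightarrow> in_alcove p b (\<lambda>k. of_int (X k))"
proof -
  define Z :: "nat \<Rightarrow> real" where "Z = (\<lambda>k. of_int (X (W k) + int p * U k))"
  have "in_alcove p False (\<lambda>k. of_int (Y k)) \<longleftrightarrow> in_alcove p False (\<lambda>k. Z k + of_int c)"
    by (intro in_alcove_cong) (simp add: Y Z_def)
  also have "\<dots> \<longleftrightarrow> in_alcove p b (\<lambda>k. Z (inv W k) - real p * of_int (U (inv W k)))"
    by (simp add: in_alcove_add_const in_alcove_Wtil1_factor_iff[OF fac W U2])
  also have "\<dots> \<longleftrightarrow> in_alcove p b (\<lambda>k. of_int (X k))"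
    by (intro in_alcove_cong) (simp add: Z_def permutes_inverses(1)[OF W])
  finally show ?thesis .
qed

lemma Trns_rep_minus_const:
  assumes w: "w \<in> Wgrp f" and nu: "nu \<in> LR f" and s: "res f s = om" and i: "i < f"
    and U: "\<And>k. k < 3 \<Longrightarrow> om ((i + 1) mod f) k = U k"
    and lift: "\<And>k. k < 3 \<Longrightarrow> mu i k + om i k + nu i k = lam i (w i k) + eta f i (w i k) + int p * U k + c"
    and j: "j < 3"
  shows "Trns_rep f p mu s nu w i j - lam i j
    = c + (s i 2 - (nu i 0 + nu i 1) div 3 - int p * s ((i + 1) mod f) 2)"
proof -
  define k where "k = inv (w i) j"
  have k: "k < 3" unfolding k_def by (rule inv_permutes3_lt[OF Wgrp_permutes[OF w i] j])
  have "w i k = j" unfolding k_def using Wgrp_bij[OF w] by (simp add: bij_def surj_f_inv_f)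
  then show ?thesis
    using Trns_rep_shifted[OF w nu s i j, of p mu] lift[OF k] U[OF k] unfolding k_def[symmetric]
    by simp
qed

lemma resZ_eq_sum3: "i < f \<Longrightarrow> resZ f x i = x i 0 + x i 1 + x i 2"
  by (simp add: resZ_def sum_lessThan_3)

lemma Wtil1_factor_unique_mod_LR:
  assumes nu: "nu \<in> LR f" and om: "om \<in> LW f" and r: "r < f"
    and fac: "Wtil1_factor b w (om r)" and fac': "Wtil1_factor b w' U" and U2: "U 2 = 0"
    and same_class: "(om r 0 + nu r 0 + (om r 1 + nu r 1)) mod 3 = (U 0 + U 1) mod 3"
    and k: "k < 3"
  shows "w k = w' k \<and> om r k = U k"
proof -
  have "(om r 0 + om r 1) mod 3 = (U 0 + U 1) mod 3"
    using LR_add_mod3[OF nu r, of om] same_class by simp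
  then have "w 0 = w' 0 \<and> w 1 = w' 1 \<and> w 2 = w' 2 \<and> om r 0 = U 0 \<and> om r 1 = U 1"
    by (rule Wtil1_factor_unique[OF fac fac'])
  moreover have "om r 2 = 0" using om by (simp add: LW_def)
  moreover have "k = 0 \<or> k = 1 \<or> k = 2" using k by arith
  ultimately show ?thesis using U2 by auto
qed

lemma Trns_rep_cls_eq:
  assumes w: "w \<in> Wgrp f" and nu: "nu \<in> LR f" and s: "s \<in> Xw f" "res f s = om"
    and mu: "mu \<in> Xw f" and lam: "lam \<in> Xw f"
    and y: "\<And>i. i < f \<Longrightarrow> resZ f lam i = resZ f mu i + int p * y i - y ((i + f - 1) mod f)"
    and U: "\<And>i k. i < f \<Longrightarrow> k < 3 \<Longrightarrow> om ((i + 1) mod f) k = U i k"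
    and U_class: "\<And>i. (U i 0 + U i 1) mod 3 = (- y i) mod 3"
    and lift: "\<And>i k. i < f \<Longrightarrow> k < 3 \<Longrightarrow>
      mu i k + om i k + nu i k = lam i (w i k) + eta f i (w i k) + int p * U i k + c i"
  shows "cls f p (Trns_rep f p mu s nu w) = cls f p lam"
proof (rule cls_eq_of_factorwise_diff[OF Trns_rep_Xw[OF w mu s(1)] lam])
  define Q where "Q k = (resZ f s k + y ((k + f - 1) mod f)) div 3" for k
  fix i j :: nat assume i: "i < f" and j: "j < 3"
  define e where "e = c i + (s i 2 - (nu i 0 + nu i 1) div 3 - int p * s ((i + 1) mod f) 2)"
  have diff: "Trns_rep f p mu s nu w i j' - lam i j' = e" if "j' < 3" for j'
    unfolding e_def
    by (rule Trns_rep_minus_const[OF w nu s(2) i,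
          where U = "U i" and c = "c i" and mu = mu and lam = lam and p = p, OF U[OF i] lift[OF i] that])
  have Q3: "3 * Q k = resZ f s k + y ((k + f - 1) mod f)" if k: "k < f" for k
  proof -
    let ?k' = "(k + f - 1) mod f"
    have "s k 0 = om k 0 + s k 2" "s k 1 = om k 1 + s k 2"
      using res_eqD[OF s(2) k, of 0] res_eqD[OF s(2) k, of 1] by simp_all
    moreover have "om k 0 = U ?k' 0" "om k 1 = U ?k' 1"
      using U[of ?k'] k by simp_all
    ultimately have "resZ f s k = U ?k' 0 + U ?k' 1 + 3 * s k 2"
      using k by (simp add: resZ_eq_sum3)
    moreover have "3 dvd (U ?k' 0 + U ?k' 1) + y ?k'"
      using U_class[of ?k'] by (simp add: mod_eq_dvd_iff)
    ultimately have "3 dvd resZ f s k + y ?k'" by presburger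
    then show ?thesis by (simp add: Q_def)
  qed
  have "3 * e = resZ f (Trns_rep f p mu s nu w) i - resZ f lam i"
    using diff[of 0] diff[of 1] diff[of 2] i by (simp add: resZ_eq_sum3)
  also have "\<dots> = 3 * Q i - int p * (3 * Q ((i + 1) mod f))"
    using resZ_Trns_rep[OF w nu i, of p mu s] y[OF i] Q3[OF i]
      Q3[OF succ_mod_lt[OF i], unfolded pred_succ_mod[OF i]]
    by (simp add: algebra_simps)
  finally show "Trns_rep f p mu s nu w i j - lam i j = Q i - int p * Q ((i + 1) mod f)"
    using diff[OF j] by simp
qed

lemma LWmu_liftE:
  assumes W: "\<And>i. W i permutes {..<3}" and fac: "\<And>i. Wtil1_factor (b i) (W i) (U i)"
    and U2: "\<And>i. U i 2 = 0" and U_class: "\<And>i. (U i 0 + U i 1) mod 3 = (- y i) mod 3"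
    and b: "\<And>i. i < f \<Longrightarrow> in_alcove p (b i) (\<lambda>k. of_int (lam i k + eta f i k))"
    and y: "\<And>i. i < f \<Longrightarrow> resZ f lam i = resZ f mu i + int p * y i - y ((i + f - 1) mod f)"
  obtains om' c where "om' \<in> LWmu f p mu"
    "\<And>i k. i < f \<Longrightarrow> k < 3 \<Longrightarrow>
       mu i k + om' i k = lam i (W i k) + eta f i (W i k) + int p * U i k + c i"
    "\<And>i. i < f \<Longrightarrow> (om' ((i + 1) mod f) 0 + om' ((i + 1) mod f) 1) mod 3 = (U i 0 + U i 1) mod 3"
proof -
  define v where "v i k = lam i (W i k) + eta f i (W i k)" for i k
  define om' where "om' i j = (if i < f \<and> j < 2
      then v i j - v i 2 - (mu i j - mu i 2) + int p * U i j else 0)" for i j :: nat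
  have lift: "mu i k + om' i k = v i k + int p * U i k + (mu i 2 - v i 2)" if "i < f" "k < 3" for i k
  proof -
    have "k = 0 \<or> k = 1 \<or> k = 2" using that(2) by arith
    then show ?thesis using that(1) U2[of i] by (auto simp: om'_def)
  qed
  have "om' \<in> LW f" by (simp add: LW_def Xw_def om'_def)
  then have "om' \<in> LWmu f p mu"
    unfolding LWmu_iff using in_alcove_lift_iff[OF W fac U2, of "\<lambda>k. mu _ k + om' _ k"] b lift
    by (simp add: v_def)
  moreover have "(om' ((i + 1) mod f) 0 + om' ((i + 1) mod f) 1) mod 3 = (U i 0 + U i 1) mod 3"
    if i: "i < f" for i
  proof -
    let ?r = "(i + 1) mod f"
    have r: "?r < f" by (rule succ_mod_lt[OF i])
    have "v ?r 0 + v ?r 1 + v ?r 2 = resZ f lam ?r"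
      using sum_permutes3[OF W, of "\<lambda>k. lam ?r k + eta f ?r k"] r
      by (simp add: v_def resZ_eq_sum3 sum_lessThan_3)
    then have om'_sum: "om' ?r 0 + om' ?r 1
        = int p * (y ?r + U ?r 0 + U ?r 1) - y i + 3 * (mu ?r 2 - v ?r 2)"
      using y[OF r, unfolded pred_succ_mod[OF i]] r by (simp add: om'_def resZ_eq_sum3 algebra_simps)
    have "3 dvd y ?r + U ?r 0 + U ?r 1"
      using U_class[of ?r] by (simp add: mod_eq_dvd_iff algebra_simps)
    then obtain t where t: "y ?r + U ?r 0 + U ?r 1 = 3 * t" by (auto elim: dvdE)
    have "om' ?r 0 + om' ?r 1 = 3 * (int p * t + (mu ?r 2 - v ?r 2)) + - y i"
      using om'_sum unfolding t by (simp add: algebra_simps)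
    then have "(om' ?r 0 + om' ?r 1) mod 3 = (- y i) mod 3" by (simp only: mod_mult_self4)
    with U_class[of i] show ?thesis by simp
  qed
  ultimately show thesis
    using that[of om' "\<lambda>i. mu i 2 - v i 2"] lift by (simp add: v_def add.assoc)
qed

lemma X1_p_regularE:
  assumes f: "1 \<le> f" and "lam \<in> X1 f p" "p_regular f p lam"
  obtains b where "3 \<le> p" "lam \<in> Xw f"
    "\<And>i. i < f \<Longrightarrow> in_alcove p (b i) (\<lambda>k. of_int (lam i k + eta f i k))"
proof -
  have "lam \<in> Xw f" and "\<forall>i<f. \<exists>b. in_alcove p b (\<lambda>k. of_int (lam i k + eta f i k))"
    using assms(2,3) X1_p_regular_iff by blast+
  then obtain b where b: "\<And>i. i < f \<Longrightarrow> in_alcove p (b i) (\<lambda>k. of_int (lam i k + eta f i k))"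
    by metis
  have "3 \<le> p"
    using b[of 0] f by (intro in_alcove_int_three_le[of p "b 0" "\<lambda>k. lam 0 k + eta f 0 k"]) simp
  then show thesis using that \<open>lam \<in> Xw f\<close> b by blast
qed

lemma cls_subset_Trns_image:
  assumes f: "1 \<le> f" and mu: "mu \<in> Xw f"
    and sec: "\<forall>om \<in> LW f. sec om \<in> Xw f \<and> res f (sec om) = om"
    and lam: "lam \<in> X1 f p" "p_regular f p lam"
    and Z: "in_pmpiZ f p (resZ f (\<lambda>i j. lam i j - mu i j + eta f i j))"
  shows "\<exists>om' C. om' \<in> LWmu f p mu \<and> C \<in> Acal f p \<and> Trns f p sec mu (om', C) = cls f p lam"
proof -
  obtain y where y: "\<And>i. i < f \<Longrightarrow>
      resZ f lam i = resZ f mu i + int p * y i - y ((i + f - 1) mod f)"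
    using Z by (auto simp: in_pmpiZ_def resZ_eq_sum3 algebra_simps)
  obtain b where p: "3 \<le> p" and lamX: "lam \<in> Xw f"
    and b: "\<And>i. i < f \<Longrightarrow> in_alcove p (b i) (\<lambda>k. of_int (lam i k + eta f i k))"
    using X1_p_regularE[OF f lam] by blast
  have "\<forall>i. \<exists>v u. v permutes {..<3} \<and> Wtil1_factor (b i) v u \<and> u 2 = 0 \<and>
      (u 0 + u 1) mod 3 = (- y i) mod 3"
    using Wtil1_factor_exists by blast
  then obtain W U where W: "\<And>i. W i permutes {..<3}" and fac: "\<And>i. Wtil1_factor (b i) (W i) (U i)"
    and U2: "\<And>i. U i 2 = 0" and U_class: "\<And>i. (U i 0 + U i 1) mod 3 = (- y i) mod 3"
    by metis
  obtain om' c where om': "om' \<in> LWmu f p mu"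
    and lift: "\<And>i k. i < f \<Longrightarrow> k < 3 \<Longrightarrow>
       mu i k + om' i k = lam i (W i k) + eta f i (W i k) + int p * U i k + c i"
    and om'_class: "\<And>i. i < f \<Longrightarrow>
       (om' ((i + 1) mod f) 0 + om' ((i + 1) mod f) 1) mod 3 = (U i 0 + U i 1) mod 3"
    using LWmu_liftE[OF W fac U2 U_class b y] by blast
  have LW: "om' \<in> LW f" using om' by (simp add: LWmu_def)
  define c' where "c' i = b ((i + f - 1) mod f)" for i
  obtain om nu w where nu: "nu \<in> LR f" and w: "w \<in> Wgrp f" and om: "om \<in> LW f"
    and om'_eq: "om' = (\<lambda>i j. om i j + nu i j)"
    and dfac: "\<forall>i<f. Wtil1_factor (c' ((i + 1) mod f)) (w i) (om ((i + 1) mod f))"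
    and T: "Trns f p sec mu (om', alc f p c') = cls f p (Trns_rep f p mu (sec om) nu w)"
    by (rule Trns_alcE[OF p LW])
  have same: "w i k = W i k \<and> om ((i + 1) mod f) k = U i k" if i: "i < f" and k: "k < 3" for i k
  proof (rule Wtil1_factor_unique_mod_LR[OF nu om succ_mod_lt[OF i] _ fac[of i] U2[of i] _ k])
    show "Wtil1_factor (b i) (w i) (om ((i + 1) mod f))" using dfac i by (simp add: c'_def)
    show "(om ((i + 1) mod f) 0 + nu ((i + 1) mod f) 0 + (om ((i + 1) mod f) 1 + nu ((i + 1) mod f) 1))
        mod 3 = (U i 0 + U i 1) mod 3"
      using om'_class[OF i] om'_eq by simp
  qed
  have s: "sec om \<in> Xw f" "res f (sec om) = om" using sec om by auto
  have "cls f p (Trns_rep f p mu (sec om) nu w) = cls f p lam"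
  proof (rule Trns_rep_cls_eq[OF w nu s mu lamX y _ U_class])
    show "om ((i + 1) mod f) k = U i k" if "i < f" "k < 3" for i k using same that by blast
    show "mu i k + om i k + nu i k = lam i (w i k) + eta f i (w i k) + int p * U i k + c i"
      if "i < f" "k < 3" for i k
      using lift[OF that] same[OF that] om'_eq by (simp add: add.assoc)
  qed
  then show ?thesis
    using om' T by (intro exI[of _ om'] exI[of _ "alc f p c'"]) (auto simp: Acal_def)
qed

theorem proposition2p6:
  fixes p f :: nat and mu :: "nat \<Rightarrow> nat \<Rightarrow> int"
    and sec :: "(nat \<Rightarrow> nat \<Rightarrow> int) \<Rightarrow> (nat \<Rightarrow> nat \<Rightarrow> int)"
  assumes "prime p" and "1 \<le> f" and "mu \<in> Xw f"
    and "\<forall>om \<in> LW f. sec om \<in> Xw f \<and> res f (sec om) = om"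
  shows "Trns f p sec mu ` (LWmu f p mu \<times> Acal f p) =
    {cls f p lam | lam. lam \<in> X1 f p \<and> p_regular f p lam \<and>
       in_pmpiZ f p (resZ f (\<lambda>i j. lam i j - mu i j + eta f i j))}"
proof (intro set_eqI iffI)
  fix T assume "T \<in> Trns f p sec mu ` (LWmu f p mu \<times> Acal f p)"
  then obtain om' C where om': "om' \<in> LWmu f p mu" and C: "C \<in> Acal f p"
    and T: "T = Trns f p sec mu (om', C)"
    by blast
  obtain lam where "Trns f p sec mu (om', C) = cls f p lam" "lam \<in> X1 f p" "p_regular f p lam"
    "in_pmpiZ f p (resZ f (\<lambda>i j. lam i j - mu i j + eta f i j))"
    using Trns_image_subset[OF assms(2-4) om' C] by blast
  then show "T \<in> {cls f p lam | lam. lam \<in> X1 f p \<and> p_regular f p lam \<and>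
       in_pmpiZ f p (resZ f (\<lambda>i j. lam i j - mu i j + eta f i j))}"
    unfolding T by blast
next
  fix T assume "T \<in> {cls f p lam | lam. lam \<in> X1 f p \<and> p_regular f p lam \<and>
       in_pmpiZ f p (resZ f (\<lambda>i j. lam i j - mu i j + eta f i j))}"
  then obtain lam where T: "T = cls f p lam" and lam: "lam \<in> X1 f p" "p_regular f p lam"
    "in_pmpiZ f p (resZ f (\<lambda>i j. lam i j - mu i j + eta f i j))"
    by blast
  obtain om' C where "om' \<in> LWmu f p mu" "C \<in> Acal f p" "Trns f p sec mu (om', C) = cls f p lam"
    using cls_subset_Trns_image[OF assms(2-4) lam] by blast
  then show "T \<in> Trns f p sec mu ` (LWmu f p mu \<times> Acal f p)"
    unfolding T by (metis SigmaI image_eqI)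
qed

end
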